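(* For every $n\ge5$, the map $p_n^2:X_n^2\to X_{n-1}^2$, $(x_1,\dots,x_n)\mapsto(x_1,\dots,x_{n-1})$, is not a (locally trivial) fibration.
   Context: $X_n^2$ ($n\ge3$) is the space of ordered $n$-tuples of points of $\mathbb{C}^2$ such that no three of the points lie on a common (affine) line. *)

theory Defs
  imports "HOL-Analysis.Analysis"
begin

type_synonym C2 = "complex \<times> complex"

definition cline :: "C2 \<Rightarrow> C2 \<Rightarrow> C2 set" where
  "cline a v = {(fst a + t * fst v, snd a + t * snd v) | t. True}"

definition on_common_line :: "C2 \<Rightarrow> C2 \<Rightarrow> C2 \<Rightarrow> bool" where
  "on_common_line x y z \<longleftrightarrow>
     (\<exists>a v. v \<noteq> (0,0) \<and> x \<in> cline a v \<and> y \<in> cline a v \<and> z \<in> cline a v)"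

text \<open>X_n^2: ordered n-tuples (indexed by 0..n-1) of points of C^2, no three on a common line.\<close>
definition Xset :: "nat \<Rightarrow> (nat \<Rightarrow> C2) set" where
  "Xset n = {x \<in> PiE {..<n} (\<lambda>_. UNIV).
     \<forall>i<n. \<forall>j<n. \<forall>k<n. i \<noteq> j \<and> i \<noteq> k \<and> j \<noteq> k \<longrightarrow> \<not> on_common_line (x i) (x j) (x k)}"

definition Xtop :: "nat \<Rightarrow> (nat \<Rightarrow> C2) topology" where
  "Xtop n = subtopology (product_topology (\<lambda>_. euclidean) {..<n}) (Xset n)"

definition proj_last :: "nat \<Rightarrow> (nat \<Rightarrow> C2) \<Rightarrow> (nat \<Rightarrow> C2)" where
  "proj_last n x = restrict x {..<n-1}"

definition locally_trivial :: "'a topology \<Rightarrow> 'b topology \<Rightarrow> ('a \<Rightarrow> 'b) \<Rightarrow> 'c topology \<Rightarrow> bool" where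
  "locally_trivial E B p F \<longleftrightarrow>
     continuous_map E B p \<and>
     (\<forall>b \<in> topspace B. \<exists>U \<phi>. openin B U \<and> b \<in> U \<and>
        homeomorphic_map (subtopology E {e \<in> topspace E. p e \<in> U})
                         (prod_topology (subtopology B U) F) \<phi> \<and>
        (\<forall>e \<in> topspace E. p e \<in> U \<longrightarrow> fst (\<phi> e) = p e))"

end

theory Submission
  imports Defs "HOL-Library.Periodic_Fun"
begin

text \<open>
  For 0 \<le> s < 1 put the points x_0, ..., x_(n-2) on the parabola y = x^2 at the parameters
  0, 3, 1, 2 + s, -4, -5, ... The chords x_0 x_1 and x_2 x_3 are the lines L1 = 0 and L2 = 0 with
  L1 = y - 3x and L2 = y - (3 + s) x + (2 + s); they are parallel exactly for s = 0, where
  L2 = L1 + 2. For s > 0, (L1, L2) are affine coordinates, and {|L1| = |L2| = 1/4} is a torus in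
  the fibre over this configuration on which L1 and L2 wind once around 0 along the first and
  the second circle respectively. A local trivialisation near s = 0 carries this torus through
  the fibres to the fibre over s = 0. Along the way L1 and L2 never vanish, so they have
  continuous logarithms, and on the final torus (arg L1, arg L2) / (2 pi) is the identity of
  R^2 plus a periodic, hence bounded, map. By Brouwer's theorem it is onto; at a point with
  arg L1 = 0 and arg L2 = pi we get L1 > 0 > L2, contradicting L2 = L1 + 2.
\<close>

section \<open>Logarithms on a deformed torus\<close>

lemma continuous_exp_eq_1_constant:
  fixes h :: "'a::topological_space \<Rightarrow> complex"
  assumes "connected S" "continuous_on S h" "\<And>x. x \<in> S \<Longrightarrow> exp (h x) = 1"
  shows "h constant_on S"
proof (rule continuous_discrete_range_constant[OF assms(1,2)])
  fix x assume "x \<in> S"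
  have "2 * pi \<le> norm (h y - h x)" if "y \<in> S" "h y \<noteq> h x" for y
  proof -
    have "exp (h y - h x) = 1"
      using assms(3) \<open>x \<in> S\<close> \<open>y \<in> S\<close> by (simp add: exp_diff)
    then obtain k :: int where k: "Re (h y - h x) = 0" "Im (h y - h x) = of_int (2 * k) * pi"
      unfolding exp_eq_1 by blast
    with that have "k \<noteq> 0"
      by (auto simp: complex_eq_iff)
    then have "2 * pi * 1 \<le> 2 * pi * \<bar>of_int k\<bar>"
      by (intro mult_left_mono) auto
    also have "\<dots> = norm (h y - h x)"
      using k by (simp add: cmod_eq_Im abs_mult)
    finally show ?thesis by simp
  qed
  then show "\<exists>e>0. \<forall>y. y \<in> S \<and> h y \<noteq> h x \<longrightarrow> e \<le> norm (h y - h x)"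
    by (intro exI[of _ "2 * pi"]) auto
qed

lemma continuous_logarithm_shift:
  fixes G K :: "real \<times> real \<times> real \<Rightarrow> complex"
  defines "S \<equiv> {0..1} \<times> UNIV"
  assumes "continuous_on S G" and log: "\<And>x. x \<in> S \<Longrightarrow> K x = exp (G x)"
    and periodic: "\<And>t u v. K (t, u + du, v + dv) = K (t, u, v)"
    and initial: "\<And>u v. K (0, u, v) = c * exp (\<i> * of_real (2 * pi * (a * u + b * v)))"
    and "c \<noteq> 0" and "t \<in> {0..1}"
  shows "G (t, u + du, v + dv) = G (t, u, v) + \<i> * of_real (2 * pi * (a * du + b * dv))"
proof -
  define shift :: "real \<times> real \<times> real \<Rightarrow> real \<times> real \<times> real"
    where "shift x = (fst x, fst (snd x) + du, snd (snd x) + dv)" for x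
  define q where "q x = G x - \<i> * of_real (2 * pi * (a * fst (snd x) + b * snd (snd x))) - G (0, 0, 0)"
    for x
  \<comment> \<open>G \<circ> shift - G is a logarithm of (K \<circ> shift) / K = 1, hence constant;
    its value is read off on the slice t = 0.\<close>
  have "(\<lambda>x. G (shift x) - G x) constant_on S"
  proof (rule continuous_exp_eq_1_constant)
    show "connected S"
      unfolding S_def by (intro convex_connected convex_Times) auto
    show "continuous_on S (\<lambda>x. G (shift x) - G x)"
      unfolding shift_def
      by (intro continuous_intros continuous_on_compose2[OF assms(2)]) (auto simp: S_def)
    show "exp (G (shift x) - G x) = 1" if "x \<in> S" for x
      using log[of x] log[of "shift x"] periodic[of "fst x" "fst (snd x)" "snd (snd x)"] that
      by (auto simp: exp_diff shift_def S_def)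
  qed
  then have "G (shift (t, u, v)) - G (t, u, v) = G (shift (0, 0, 0)) - G (0, 0, 0)"
    using \<open>t \<in> {0..1}\<close> by (auto simp: constant_on_def S_def)
  moreover have "q constant_on {0} \<times> UNIV"
  proof (rule continuous_exp_eq_1_constant)
    show "connected ({0::real} \<times> (UNIV :: (real \<times> real) set))"
      by (intro convex_connected convex_Times) auto
    show "continuous_on ({0} \<times> UNIV) q"
      unfolding q_def
      by (intro continuous_intros continuous_on_subset[OF assms(2)]) (auto simp: S_def)
    show "exp (q x) = 1" if x0: "x \<in> {0} \<times> UNIV" for x
    proof -
      obtain u' v' where x: "x = (0, u', v')"
        using x0 by (cases x rule: prod_cases3) auto
      have "exp (G x) = c * exp (\<i> * of_real (2 * pi * (a * u' + b * v')))" "exp (G (0, 0, 0)) = c"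
        using log[of x] log[of "(0, 0, 0)"] initial[of u' v'] initial[of 0 0] x by (simp_all add: S_def)
      then show ?thesis
        using \<open>c \<noteq> 0\<close> x by (simp add: q_def exp_diff)
    qed
  qed
  then have "q (0, du, dv) = q (0, 0, 0)"
    by (auto simp: constant_on_def)
  ultimately show ?thesis
    by (simp add: shift_def q_def algebra_simps)
qed

lemma bounded_range_periodic:
  fixes D :: "real \<times> real \<Rightarrow> 'a::real_normed_vector"
  assumes "continuous_on UNIV D"
    and periodic: "\<And>u v. D (u + 1, v) = D (u, v)" "\<And>u v. D (u, v + 1) = D (u, v)"
  shows "bounded (range D)"
proof -
  have shift: "D (u + of_int k, v + of_int l) = D (u, v)" for u v k l
  proof -
    interpret fst_periodic: periodic_fun_simple' "\<lambda>u. D (u, v + of_int l)"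
      by standard (rule periodic(1))
    interpret snd_periodic: periodic_fun_simple' "\<lambda>v. D (u, v)"
      by standard (rule periodic(2))
    show ?thesis
      using fst_periodic.plus_of_int[of u k] snd_periodic.plus_of_int[of v l] by simp
  qed
  have "range D \<subseteq> D ` ({0..1} \<times> {0..1})"
  proof clarify
    fix u v
    have "D (u, v) = D (frac u, frac v)"
      using shift[of "frac u" "\<lfloor>u\<rfloor>" "frac v" "\<lfloor>v\<rfloor>"] by (simp add: frac_def)
    moreover have "(frac u, frac v) \<in> {0..1} \<times> {0..1}"
      by (simp add: frac_ge_0 less_imp_le[OF frac_lt_1])
    ultimately show "D (u, v) \<in> D ` ({0..1} \<times> {0..1})"
      by blast
  qed
  moreover have "compact (D ` ({0..1} \<times> {0..1}))"
    by (intro compact_continuous_image continuous_on_subset[OF assms(1)] compact_Times) auto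
  ultimately show ?thesis
    using bounded_subset compact_imp_bounded by blast
qed

lemma surj_if_bounded_displacement:
  fixes F :: "'a::euclidean_space \<Rightarrow> 'a"
  assumes "continuous_on UNIV F" and "bounded (range (\<lambda>w. F w - w))"
  shows "surj F"
proof -
  obtain M where M: "\<And>w. norm (F w - w) \<le> M"
    using assms(2) by (auto simp: bounded_iff)
  have "\<exists>w\<in>cball 0 (norm q + M + 1). F w = q" for q
  proof (rule brouwer_surjective_cball[where S = "{q}"])
    show "continuous_on (cball 0 (norm q + M + 1)) F"
      using assms(1) by (rule continuous_on_subset) simp
    show "0 < norm q + M + 1"
      using M[of 0] norm_ge_zero[of q] norm_ge_zero[of "F 0 - 0"] by linarith
    show "x + (w - F w) \<in> cball 0 (norm q + M + 1)" if "x \<in> {q}" for x w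
      using that norm_triangle_ineq[of q "w - F w"] M[of w] by (simp add: norm_minus_commute)
  qed simp
  then show ?thesis
    unfolding surj_def by metis
qed

lemma Im_lift_surjective:
  fixes g1 g2 :: "real \<times> real \<Rightarrow> complex"
  assumes "continuous_on UNIV g1" "continuous_on UNIV g2"
    and shift1: "\<And>u v. g1 (u + 1, v) = g1 (u, v) + 2 * pi * \<i>" "\<And>u v. g1 (u, v + 1) = g1 (u, v)"
    and shift2: "\<And>u v. g2 (u + 1, v) = g2 (u, v)" "\<And>u v. g2 (u, v + 1) = g2 (u, v) + 2 * pi * \<i>"
  obtains w where "Im (g1 w) = \<alpha>" "Im (g2 w) = \<beta>"
proof -
  define A where "A w = (Im (g1 w) / (2 * pi), Im (g2 w) / (2 * pi))" for w
  have "continuous_on UNIV A"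
    unfolding A_def using assms(1,2) by (intro continuous_intros) auto
  moreover have "bounded (range (\<lambda>w. A w - w))"
  proof (rule bounded_range_periodic)
    show "continuous_on UNIV (\<lambda>w. A w - w)"
      using \<open>continuous_on UNIV A\<close> by (intro continuous_intros)
    show "A (u + 1, v) - (u + 1, v) = A (u, v) - (u, v)" "A (u, v + 1) - (u, v + 1) = A (u, v) - (u, v)"
      for u v
      using shift1[of u v] shift2[of u v] by (simp_all add: A_def field_simps)
  qed
  ultimately have "surj A"
    by (rule surj_if_bounded_displacement)
  then obtain w where "A w = (\<alpha> / (2 * pi), \<beta> / (2 * pi))"
    by (metis surjD)
  then show thesis
    by (intro that[of w]) (simp_all add: A_def)
qed

lemma torus_winding_obstruction:
  fixes K1 K2 :: "real \<times> real \<times> real \<Rightarrow> complex"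
  defines "S \<equiv> {0..1} \<times> UNIV"
  assumes cont: "continuous_on S K1" "continuous_on S K2"
    and nonzero: "\<And>x. x \<in> S \<Longrightarrow> K1 x \<noteq> 0" "\<And>x. x \<in> S \<Longrightarrow> K2 x \<noteq> 0"
    and periodic: "\<And>t u v. K1 (t, u + 1, v) = K1 (t, u, v)" "\<And>t u v. K1 (t, u, v + 1) = K1 (t, u, v)"
      "\<And>t u v. K2 (t, u + 1, v) = K2 (t, u, v)" "\<And>t u v. K2 (t, u, v + 1) = K2 (t, u, v)"
    and initial: "\<And>u v. K1 (0, u, v) = c * exp (\<i> * of_real (2 * pi * u))"
      "\<And>u v. K2 (0, u, v) = c * exp (\<i> * of_real (2 * pi * v))"
    and "c \<noteq> 0" and "0 \<le> r"
  shows "\<exists>u v. K2 (1, u, v) \<noteq> K1 (1, u, v) + of_real r"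
proof -
  have "contractible S"
    unfolding S_def by (intro convex_imp_contractible convex_Times) auto
  then obtain G1 G2 where G: "continuous_on S G1" "continuous_on S G2"
    and log: "\<And>x. x \<in> S \<Longrightarrow> K1 x = exp (G1 x)" "\<And>x. x \<in> S \<Longrightarrow> K2 x = exp (G2 x)"
    using continuous_logarithm_on_contractible[OF cont(1) _ nonzero(1)]
      continuous_logarithm_on_contractible[OF cont(2) _ nonzero(2)] by metis
  have initial': "K1 (0, u, v) = c * exp (\<i> * of_real (2 * pi * (1 * u + 0 * v)))"
    "K2 (0, u, v) = c * exp (\<i> * of_real (2 * pi * (0 * u + 1 * v)))" for u v
    using initial by simp_all
  have shifts: "G1 (1, u + 1, v + 0) = G1 (1, u, v) + \<i> * of_real (2 * pi * (1 * 1 + 0 * 0))"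
    "G1 (1, u + 0, v + 1) = G1 (1, u, v) + \<i> * of_real (2 * pi * (1 * 0 + 0 * 1))"
    "G2 (1, u + 1, v + 0) = G2 (1, u, v) + \<i> * of_real (2 * pi * (0 * 1 + 1 * 0))"
    "G2 (1, u + 0, v + 1) = G2 (1, u, v) + \<i> * of_real (2 * pi * (0 * 0 + 1 * 1))" for u v
    by (rule continuous_logarithm_shift[where K = K1 and c = c]
        continuous_logarithm_shift[where K = K2 and c = c];
        use G log periodic initial' \<open>c \<noteq> 0\<close> in \<open>simp add: S_def\<close>)+
  have slice: "(\<lambda>w. (1, w)) ` UNIV \<subseteq> S"
    by (auto simp: S_def)
  obtain w where "Im (G1 (1, w)) = 0" "Im (G2 (1, w)) = pi"
  proof (rule Im_lift_surjective[of "\<lambda>w. G1 (1, w)" "\<lambda>w. G2 (1, w)"])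
    show "continuous_on UNIV (\<lambda>w. G1 (1, w))" "continuous_on UNIV (\<lambda>w. G2 (1, w))"
      by (intro continuous_on_compose2[OF G(1)] continuous_on_compose2[OF G(2)] continuous_intros
          slice)+
  qed (use shifts in \<open>simp_all add: algebra_simps\<close>)
  moreover have "(1, w) \<in> S"
    by (simp add: S_def)
  ultimately have "Re (K1 (1, w)) > 0" "Re (K2 (1, w)) < 0"
    using log by (simp_all add: Re_exp)
  then show ?thesis
    using \<open>0 \<le> r\<close> by (intro exI[of _ "fst w"] exI[of _ "snd w"]) auto
qed

section \<open>Collinearity and the spaces X_n\<close>

definition area_form :: "C2 \<Rightarrow> C2 \<Rightarrow> C2 \<Rightarrow> complex" where
  "area_form x y z = (fst y - fst x) * (snd z - snd x) - (snd y - snd x) * (fst z - fst x)"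

lemma on_common_line_iff_area_form_eq_0:
  "on_common_line x y z \<longleftrightarrow> area_form x y z = 0"
proof
  assume "on_common_line x y z"
  then show "area_form x y z = 0"
    by (auto simp: on_common_line_def cline_def area_form_def algebra_simps)
next
  assume det: "area_form x y z = 0"
  obtain v t where v: "v \<noteq> (0, 0)" and y: "y \<in> cline x v"
    and z: "z = (fst x + t * fst v, snd x + t * snd v)"
  proof (cases "y = x")
    case True
    show thesis
    proof (cases "z = x")
      case True
      with \<open>y = x\<close> show thesis
        by (intro that[of "(1, 0)" 0]) (auto simp: cline_def intro!: exI[of _ 0])
    next
      case False
      with \<open>y = x\<close> show thesis
        by (intro that[of "z - x" 1]) (auto simp: cline_def prod_eq_iff intro!: exI[of _ 0])
    qed
  next
    case False
    define v where "v = y - x"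
    define t where "t = (if fst v \<noteq> 0 then (fst z - fst x) / fst v else (snd z - snd x) / snd v)"
    show thesis
    proof (rule that[of v t])
      show "v \<noteq> (0, 0)" "y \<in> cline x v"
        using False by (auto simp: v_def cline_def prod_eq_iff intro!: exI[of _ 1])
      show "z = (fst x + t * fst v, snd x + t * snd v)"
        using det False by (auto simp: t_def v_def area_form_def prod_eq_iff field_simps)
    qed
  qed
  moreover have "x \<in> cline x v"
    by (auto simp: cline_def intro!: exI[of _ 0])
  moreover have "z \<in> cline x v"
    using z by (auto simp: cline_def)
  ultimately show "on_common_line x y z"
    unfolding on_common_line_def by blast
qed

lemma on_common_line_iff_subset_cline:
  "on_common_line x y z \<longleftrightarrow> (\<exists>a v. v \<noteq> (0, 0) \<and> {x, y, z} \<subseteq> cline a v)"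
  by (simp add: on_common_line_def)

lemma sort_distinct_triple:
  fixes i j k :: nat
  assumes "i \<noteq> j" "i \<noteq> k" "j \<noteq> k"
  obtains a b c where "a < b" "b < c" "{a, b, c} = {i, j, k}"
proof -
  consider "i < j" "j < k" | "i < k" "k < j" | "j < i" "i < k" | "j < k" "k < i"
    | "k < i" "i < j" | "k < j" "j < i"
    using assms by arith
  then show thesis
    by cases (erule (1) that; blast)+
qed

lemma restrict_in_Xset_iff:
  "restrict f {..<n} \<in> Xset n \<longleftrightarrow>
     (\<forall>i j k. i < j \<and> j < k \<and> k < n \<longrightarrow> area_form (f i) (f j) (f k) \<noteq> 0)"
proof -
  have "restrict f {..<n} \<in> Xset n \<longleftrightarrow> (\<forall>i<n. \<forall>j<n. \<forall>k<n.
      i \<noteq> j \<and> i \<noteq> k \<and> j \<noteq> k \<longrightarrow> \<not> on_common_line (f i) (f j) (f k))"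
    by (simp add: Xset_def)
  also have "\<dots> \<longleftrightarrow>
      (\<forall>i j k. i < j \<and> j < k \<and> k < n \<longrightarrow> \<not> on_common_line (f i) (f j) (f k))"
  proof (intro iffI allI impI)
    fix i j k :: nat
    assume "\<forall>i<n. \<forall>j<n. \<forall>k<n. i \<noteq> j \<and> i \<noteq> k \<and> j \<noteq> k
        \<longrightarrow> \<not> on_common_line (f i) (f j) (f k)"
      and "i < j \<and> j < k \<and> k < n"
    then show "\<not> on_common_line (f i) (f j) (f k)"
      by simp
  next
    fix i j k :: nat
    assume ordered: "\<forall>a b c. a < b \<and> b < c \<and> c < n \<longrightarrow> \<not> on_common_line (f a) (f b) (f c)"
      and bounds: "i < n" "j < n" "k < n" and distinct: "i \<noteq> j \<and> i \<noteq> k \<and> j \<noteq> k"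
    obtain a b c where abc: "a < b" "b < c" "{a, b, c} = {i, j, k}"
      using sort_distinct_triple distinct by blast
    have "c \<in> {i, j, k}"
      unfolding abc(3)[symmetric] by simp
    then have "c < n"
      using bounds by auto
    have image_eq: "{f a, f b, f c} = {f i, f j, f k}"
      using arg_cong[OF abc(3), of "image f"] by simp
    have "\<not> on_common_line (f a) (f b) (f c)"
      using ordered abc(1,2) \<open>c < n\<close> by blast
    then show "\<not> on_common_line (f i) (f j) (f k)"
      unfolding on_common_line_iff_subset_cline image_eq .
  qed
  finally show ?thesis
    by (simp add: on_common_line_iff_area_form_eq_0)
qed

lemma Xset_not_on_common_line:
  "w \<in> Xset n \<Longrightarrow> i < n \<Longrightarrow> j < n \<Longrightarrow> k < n \<Longrightarrow> i \<noteq> j \<Longrightarrow> i \<noteq> k \<Longrightarrow> j \<noteq> k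
    \<Longrightarrow> \<not> on_common_line (w i) (w j) (w k)"
  unfolding Xset_def by blast

lemma topspace_Xtop: "topspace (Xtop n) = Xset n"
  unfolding Xtop_def Xset_def by auto

lemma continuous_map_Xtop_iff:
  "continuous_map X (Xtop n) f \<longleftrightarrow>
     f \<in> topspace X \<rightarrow> Xset n \<and> (\<forall>k<n. continuous_map X euclidean (\<lambda>x. f x k))"
  unfolding Xtop_def continuous_map_in_subtopology continuous_map_componentwise
  by (auto simp: Xset_def PiE_def)

section \<open>Configurations on a parabola\<close>

definition parabola_point :: "real \<Rightarrow> C2" where
  "parabola_point t = (of_real t, of_real (t\<^sup>2))"

definition chord_eq :: "real \<Rightarrow> real \<Rightarrow> C2 \<Rightarrow> complex" where
  "chord_eq a b y = snd y - of_real (a + b) * fst y + of_real (a * b)"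

lemma area_form_parabola_points:
  "area_form (parabola_point a) (parabola_point b) (parabola_point c) =
     of_real ((b - a) * (c - a) * (c - b))"
  unfolding area_form_def parabola_point_def by (simp add: algebra_simps power2_eq_square)

lemma area_form_parabola_chord:
  "area_form (parabola_point a) (parabola_point b) y = of_real (b - a) * chord_eq a b y"
  unfolding area_form_def parabola_point_def chord_eq_def
  by (simp add: algebra_simps power2_eq_square)

definition node :: "real \<Rightarrow> nat \<Rightarrow> real" where
  "node s k = (if k = 0 then 0 else if k = 1 then 3 else if k = 2 then 1 else if k = 3 then 2 + s
     else - real k)"

lemma node_eq_iff: "0 \<le> s \<Longrightarrow> s < 1 \<Longrightarrow> node s i = node s j \<longleftrightarrow> i = j"
  unfolding node_def by auto

definition base_config :: "nat \<Rightarrow> real \<Rightarrow> nat \<Rightarrow> C2" where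
  "base_config m s = restrict (\<lambda>k. parabola_point (node s k)) {..<m}"

definition extend_config :: "nat \<Rightarrow> real \<Rightarrow> C2 \<Rightarrow> nat \<Rightarrow> C2" where
  "extend_config n s y = restrict ((\<lambda>k. parabola_point (node s k))(n - 1 := y)) {..<n}"

lemma base_config_in_Xset: "0 \<le> s \<Longrightarrow> s < 1 \<Longrightarrow> base_config m s \<in> Xset m"
  unfolding base_config_def restrict_in_Xset_iff area_form_parabola_points
  by (simp add: node_eq_iff)

lemma extend_config_in_Xset:
  assumes "0 \<le> s" "s < 1"
    and "\<And>a b. a < b \<Longrightarrow> b < n - 1 \<Longrightarrow> chord_eq (node s a) (node s b) y \<noteq> 0"
  shows "extend_config n s y \<in> Xset n"
proof -
  define f where "f = (\<lambda>k. parabola_point (node s k))(n - 1 := y)"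
  have "area_form (f i) (f j) (f k) \<noteq> 0" if "i < j" "j < k" "k < n" for i j k
  proof (cases "k = n - 1")
    case True
    with that assms show ?thesis
      by (simp add: f_def area_form_parabola_chord node_eq_iff)
  next
    case False
    with that have "i < n - 1" "j < n - 1" "k < n - 1"
      by auto
    with that assms show ?thesis
      by (simp add: f_def area_form_parabola_points node_eq_iff)
  qed
  then show ?thesis
    unfolding extend_config_def f_def[symmetric] restrict_in_Xset_iff by blast
qed

lemma proj_last_extend_config: "proj_last n (extend_config n s y) = base_config (n - 1) s"
  unfolding proj_last_def extend_config_def base_config_def by (auto simp: fun_eq_iff)

lemma chord_eq_ne_0_in_fibre:
  assumes "w \<in> Xset n" "proj_last n w = base_config (n - 1) s" "a < b" "b < n - 1"
  shows "chord_eq (node s a) (node s b) (w (n - 1)) \<noteq> 0"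
proof -
  have "w k = parabola_point (node s k)" if "k < n - 1" for k
    using fun_cong[OF assms(2), of k] that by (simp add: proj_last_def base_config_def)
  moreover have "\<not> on_common_line (w a) (w b) (w (n - 1))"
    using Xset_not_on_common_line[OF assms(1)] assms(3,4) by simp
  ultimately show ?thesis
    using assms(3,4) by (simp add: on_common_line_iff_area_form_eq_0 area_form_parabola_chord)
qed

lemma continuous_on_node: "continuous_on A (\<lambda>s. node s k)"
proof (cases "k = 3")
  case True
  then show ?thesis
    by (simp add: node_def continuous_intros)
next
  case False
  then have "(\<lambda>s. node s k) = (\<lambda>_. node 0 k)"
    by (simp add: node_def)
  then show ?thesis
    by (metis continuous_on_const)
qed

lemma continuous_base_config: "continuous_map (top_of_set {0..<1}) (Xtop m) (base_config m)"
  unfolding continuous_map_Xtop_iff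
  using base_config_in_Xset
  by (auto simp: base_config_def parabola_point_def intro!: continuous_intros continuous_on_node)

lemma base_config_near_0:
  assumes "openin (Xtop m) U" "base_config m 0 \<in> U"
  obtains s1 where "0 < s1" "s1 \<le> 1/4" "\<And>s. 0 \<le> s \<Longrightarrow> s \<le> s1 \<Longrightarrow> base_config m s \<in> U"
proof -
  have "openin (top_of_set {0..<1}) {s \<in> {0..<1}. base_config m s \<in> U}"
    using openin_continuous_map_preimage[OF continuous_base_config assms(1)] by simp
  then obtain \<delta> where "0 < \<delta>" "\<And>s. s \<in> {0..<1} \<Longrightarrow> dist s 0 < \<delta> \<Longrightarrow> base_config m s \<in> U"
    using assms(2) unfolding openin_euclidean_subtopology_iff by force
  then show thesis
    by (intro that[of "min (\<delta> / 2) (1/4)"]) (auto simp: dist_real_def)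
qed

lemma continuous_base_config_path:
  assumes "0 \<le> s1" "s1 < 1" and "\<And>s. 0 \<le> s \<Longrightarrow> s \<le> s1 \<Longrightarrow> base_config m s \<in> U"
  shows "continuous_map (top_of_set ({0..1} \<times> (UNIV :: (real \<times> real) set)))
    (subtopology (Xtop m) U) (\<lambda>x. base_config m ((1 - fst x) * s1))"
proof -
  define S :: "(real \<times> real \<times> real) set" where "S = {0..1} \<times> UNIV"
  have bounds: "0 \<le> (1 - fst x) * s1" "(1 - fst x) * s1 \<le> s1" if "x \<in> S" for x
  proof -
    have "0 \<le> 1 - fst x" "1 - fst x \<le> 1"
      using that by (auto simp: S_def)
    with assms(1) show "0 \<le> (1 - fst x) * s1" "(1 - fst x) * s1 \<le> s1"
      by (auto intro: mult_left_le_one_le)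
  qed
  have "continuous_map (top_of_set S) (top_of_set {0..<1}) (\<lambda>x. (1 - fst x) * s1)"
  proof (rule continuous_map_into_subtopology)
    show "continuous_map (top_of_set S) euclidean (\<lambda>x. (1 - fst x) * s1)"
      by (simp add: continuous_intros)
    show "(\<lambda>x. (1 - fst x) * s1) \<in> topspace (top_of_set S) \<rightarrow> {0..<1}"
      using bounds assms(2) by (force simp del: mult_le_cancel_right2)
  qed
  from continuous_map_compose[OF this continuous_base_config]
  have "continuous_map (top_of_set S) (Xtop m) (\<lambda>x. base_config m ((1 - fst x) * s1))"
    by (simp add: o_def)
  then show ?thesis
    using bounds assms(3) by (auto simp: continuous_map_in_subtopology S_def)
qed

section \<open>A torus in the fibre and its deformation\<close>

definition chord_point :: "real \<Rightarrow> complex \<Rightarrow> complex \<Rightarrow> C2" where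
  "chord_point s z1 z2 =
     ((2 + of_real s - z2 + z1) / of_real s, z1 + 3 * ((2 + of_real s - z2 + z1) / of_real s))"

lemma chord_eq_chord_point:
  "chord_eq 0 3 (chord_point s z1 z2) = z1"
  "s \<noteq> 0 \<Longrightarrow> chord_eq 1 (2 + s) (chord_point s z1 z2) = z2"
  unfolding chord_eq_def chord_point_def by (simp_all add: field_simps)

text \<open>
  The quantity bounded here is Re (chord_eq a b y) - Re z1 for y = chord_point s z1 z2 and
  R = Re (fst y); see the next lemma.
\<close>

lemma chord_value_bound:
  fixes R s :: real
  assumes R: "6 \<le> R" and s: "0 < s" "s \<le> 1/4" and "a < b" "(a, b) \<noteq> (0, 1)" "(a, b) \<noteq> (2, 3)"
  shows "1/4 < \<bar>(3 - node s a - node s b) * R + node s a * node s b\<bar>"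
proof (cases "b < 4")
  case True
  then consider "a = 0" "b = 2" | "a = 0" "b = 3" | "a = 1" "b = 2" | "a = 1" "b = 3"
    using assms(4-6) by fastforce
  then show ?thesis
  proof cases
    case 2
    have "3/4 * 6 \<le> (1 - s) * R"
      using s R by (intro mult_mono) auto
    with 2 show ?thesis by (simp add: node_def)
  next
    case 4
    have "2 * 3 \<le> (2 + s) * (R - 3)"
      using s R by (intro mult_mono) auto
    with 4 show ?thesis by (simp add: node_def algebra_simps)
  qed (use R in \<open>simp_all add: node_def\<close>)
next
  case False
  have "node s a \<le> 3" "node s b = - real b"
    using False s by (auto simp: node_def)
  have "(3 - node s a - node s b) * R + node s a * node s b
      = (3 - node s a) * R + real b * (R - node s a)"
    using \<open>node s b = - real b\<close> by (simp add: algebra_simps)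
  moreover have "4 * 3 \<le> real b * (R - node s a)"
    using False R \<open>node s a \<le> 3\<close> by (intro mult_mono) auto
  moreover have "0 \<le> (3 - node s a) * R"
    using R \<open>node s a \<le> 3\<close> by simp
  ultimately show ?thesis by linarith
qed

lemma chord_point_avoids_chords:
  assumes s: "0 < s" "s \<le> 1/4" and z: "norm z1 = 1/4" "norm z2 = 1/4" and "a < b"
  shows "chord_eq (node s a) (node s b) (chord_point s z1 z2) \<noteq> 0"
proof (cases "(a, b) = (0, 1) \<or> (a, b) = (2, 3)")
  case True
  then show ?thesis
    using chord_eq_chord_point[of s z1 z2] z s by (auto simp: node_def)
next
  case False
  define y where "y = chord_point s z1 z2"
  define R where "R = Re (fst y)"
  have "\<bar>Re z1\<bar> \<le> 1/4" "\<bar>Re z2\<bar> \<le> 1/4"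
    using abs_Re_le_cmod z by metis+
  then have "6 * s \<le> 2 + s - Re z2 + Re z1"
    using s by linarith
  then have "6 \<le> R"
    using s by (simp add: R_def y_def chord_point_def Re_divide_of_real field_simps)
  then have bound: "1/4 < \<bar>(3 - node s a - node s b) * R + node s a * node s b\<bar>"
    using chord_value_bound s \<open>a < b\<close> False by blast
  have "snd y = z1 + 3 * fst y"
    by (simp add: y_def chord_point_def)
  then have "Re (chord_eq (node s a) (node s b) y)
      = Re z1 + ((3 - node s a - node s b) * R + node s a * node s b)"
    by (simp add: chord_eq_def R_def algebra_simps)
  with bound \<open>\<bar>Re z1\<bar> \<le> 1/4\<close> have "Re (chord_eq (node s a) (node s b) y) \<noteq> 0"
    by arith
  then show ?thesis
    unfolding y_def by auto
qed

definition loop :: "real \<Rightarrow> complex" where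
  "loop u = exp (\<i> * of_real (2 * pi * u)) / 4"

lemma norm_loop: "norm (loop u) = 1/4"
  by (simp add: loop_def norm_divide)

lemma loop_periodic: "loop (u + 1) = loop u"
proof -
  have "\<i> * of_real (2 * pi * (u + 1)) = \<i> * of_real (2 * pi * u) + 2 * pi * \<i>"
    by (simp add: algebra_simps)
  then show ?thesis
    by (simp add: loop_def exp_add)
qed

definition torus_config :: "nat \<Rightarrow> real \<Rightarrow> real \<times> real \<Rightarrow> nat \<Rightarrow> C2" where
  "torus_config n s w = extend_config n s (chord_point s (loop (fst w)) (loop (snd w)))"

lemma continuous_torus_config:
  assumes "0 < s" "s \<le> 1/4"
  shows "continuous_map euclidean (Xtop n) (torus_config n s)"
  unfolding continuous_map_Xtop_iff
proof (intro conjI allI impI)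
  show "torus_config n s \<in> topspace euclidean \<rightarrow> Xset n"
    unfolding torus_config_def
    using assms chord_point_avoids_chords[OF assms norm_loop norm_loop]
    by (intro Pi_I extend_config_in_Xset) auto
  show "continuous_map euclidean euclidean (\<lambda>w. torus_config n s w k)" if "k < n" for k
  proof (cases "k = n - 1")
    case True
    with that assms show ?thesis
      by (simp add: torus_config_def extend_config_def chord_point_def loop_def continuous_intros)
  next
    case False
    with that show ?thesis
      by (simp add: torus_config_def extend_config_def)
  qed
qed

lemma locally_trivial_transport:
  assumes "locally_trivial E B p F" and "b \<in> topspace B"
  obtains U T where "openin B U" "b \<in> U"
    and "continuous_map (prod_topology (subtopology B U) (subtopology E {e \<in> topspace E. p e \<in> U}))
           E (\<lambda>(c, e). T c e)"
    and "\<And>c e. c \<in> U \<Longrightarrow> e \<in> topspace E \<Longrightarrow> p e \<in> U \<Longrightarrow> T c e \<in> topspace E \<and> p (T c e) = c"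
    and "\<And>e. e \<in> topspace E \<Longrightarrow> p e \<in> U \<Longrightarrow> T (p e) e = e"
proof -
  obtain U \<phi> where U: "openin B U" "b \<in> U"
    and hom: "homeomorphic_map (subtopology E {e \<in> topspace E. p e \<in> U})
                (prod_topology (subtopology B U) F) \<phi>"
    and fst_\<phi>: "\<And>e. e \<in> topspace E \<Longrightarrow> p e \<in> U \<Longrightarrow> fst (\<phi> e) = p e"
    using assms unfolding locally_trivial_def by blast
  define EU where "EU = subtopology E {e \<in> topspace E. p e \<in> U}"
  define BU where "BU = subtopology B U"
  obtain \<psi> where maps: "homeomorphic_maps EU (prod_topology BU F) \<phi> \<psi>"
    using hom unfolding homeomorphic_map_maps EU_def BU_def by blast
  have \<phi>: "continuous_map EU (prod_topology BU F) \<phi>" and \<psi>: "continuous_map (prod_topology BU F) EU \<psi>"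
    and \<psi>_\<phi>: "\<And>e. e \<in> topspace EU \<Longrightarrow> \<psi> (\<phi> e) = e"
    and \<phi>_\<psi>: "\<And>y. y \<in> topspace (prod_topology BU F) \<Longrightarrow> \<phi> (\<psi> y) = y"
    using maps unfolding homeomorphic_maps_def by auto
  have topspace_EU: "topspace EU = {e \<in> topspace E. p e \<in> U}"
    by (auto simp: EU_def)
  have topspace_BU: "topspace BU = U"
    using openin_subset[OF U(1)] by (auto simp: BU_def)
  define T where "T c e = \<psi> (c, snd (\<phi> e))" for c e
  have "continuous_map (prod_topology BU EU) (prod_topology BU F) (\<lambda>z. (fst z, snd (\<phi> (snd z))))"
    using continuous_map_compose[OF continuous_map_compose[OF continuous_map_snd \<phi>] continuous_map_snd]
    by (intro continuous_map_pairedI continuous_map_fst) (simp add: o_def)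
  then have "continuous_map (prod_topology BU EU) EU (\<lambda>(c, e). T c e)"
    using continuous_map_compose[OF _ \<psi>] by (simp add: T_def case_prod_unfold o_def)
  then have "continuous_map (prod_topology BU EU) E (\<lambda>(c, e). T c e)"
    unfolding EU_def by (rule continuous_map_into_fulltopology)
  moreover have "T c e \<in> topspace E \<and> p (T c e) = c"
    if "c \<in> U" "e \<in> topspace E" "p e \<in> U" for c e
  proof -
    have "\<phi> e \<in> topspace (prod_topology BU F)"
      using continuous_map_image_subset_topspace[OF \<phi>] that topspace_EU by blast
    then have in_prod: "(c, snd (\<phi> e)) \<in> topspace (prod_topology BU F)"
      using that(1) topspace_BU by (auto simp: mem_Times_iff)
    then have "T c e \<in> topspace EU"
      using continuous_map_image_subset_topspace[OF \<psi>] by (auto simp: T_def)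
    moreover have "\<phi> (T c e) = (c, snd (\<phi> e))"
      using \<phi>_\<psi>[OF in_prod] by (simp add: T_def)
    ultimately show ?thesis
      using fst_\<phi>[of "T c e"] topspace_EU by auto
  qed
  moreover have "T (p e) e = e" if "e \<in> topspace E" "p e \<in> U" for e
  proof -
    have "(p e, snd (\<phi> e)) = \<phi> e"
      using fst_\<phi>[OF that] by (metis prod.collapse)
    then show ?thesis
      using \<psi>_\<phi>[of e] that topspace_EU by (simp add: T_def)
  qed
  ultimately show thesis
    using that[of U T] U by (simp add: EU_def BU_def)
qed

lemma fibrewise_torus_deformation:
  assumes "locally_trivial (Xtop n) (Xtop (n - 1)) (proj_last n) F"
  obtains s1 W where "0 < s1" "s1 \<le> 1/4"
    and "continuous_map (top_of_set ({0..1} \<times> UNIV)) (Xtop n) W"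
    and "\<And>x. x \<in> {0..1} \<times> UNIV \<Longrightarrow> proj_last n (W x) = base_config (n - 1) ((1 - fst x) * s1)"
    and "\<And>w. W (0, w) = torus_config n s1 w"
    and "\<And>t u v. W (t, u + 1, v) = W (t, u, v)" "\<And>t u v. W (t, u, v + 1) = W (t, u, v)"
proof -
  define S :: "(real \<times> real \<times> real) set" where "S = {0..1} \<times> UNIV"
  have "base_config (n - 1) 0 \<in> topspace (Xtop (n - 1))"
    by (simp add: topspace_Xtop base_config_in_Xset)
  then obtain U T where U: "openin (Xtop (n - 1)) U" "base_config (n - 1) 0 \<in> U"
    and T_cont: "continuous_map (prod_topology (subtopology (Xtop (n - 1)) U)
        (subtopology (Xtop n) {e \<in> topspace (Xtop n). proj_last n e \<in> U})) (Xtop n) (\<lambda>(c, e). T c e)"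
    and T_fibre: "\<And>c e. c \<in> U \<Longrightarrow> e \<in> topspace (Xtop n) \<Longrightarrow> proj_last n e \<in> U
        \<Longrightarrow> T c e \<in> topspace (Xtop n) \<and> proj_last n (T c e) = c"
    and T_id: "\<And>e. e \<in> topspace (Xtop n) \<Longrightarrow> proj_last n e \<in> U \<Longrightarrow> T (proj_last n e) e = e"
    using locally_trivial_transport[OF assms] by blast
  obtain s1 where s1: "0 < s1" "s1 \<le> 1/4"
    and near: "\<And>s. 0 \<le> s \<Longrightarrow> s \<le> s1 \<Longrightarrow> base_config (n - 1) s \<in> U"
    using base_config_near_0[OF U] by blast
  define base where "base x = base_config (n - 1) ((1 - fst x) * s1)" for x :: "real \<times> real \<times> real"
  define torus where "torus x = torus_config n s1 (snd x)" for x :: "real \<times> real \<times> real"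
  have torus_fibre: "torus x \<in> topspace (Xtop n)" "proj_last n (torus x) = base_config (n - 1) s1" for x
    using continuous_map_image_subset_topspace[OF continuous_torus_config[OF s1]]
    by (auto simp: torus_def torus_config_def proj_last_extend_config)
  have base_cont: "continuous_map (top_of_set S) (subtopology (Xtop (n - 1)) U) base"
    unfolding S_def base_def[abs_def] using s1 near by (intro continuous_base_config_path) auto
  have base_U: "base x \<in> U" if "x \<in> S" for x
    using continuous_map_image_subset_topspace[OF base_cont] that by auto
  have "continuous_map (top_of_set S) euclidean (snd :: real \<times> real \<times> real \<Rightarrow> real \<times> real)"
    by (simp add: continuous_on_snd continuous_on_id)
  from continuous_map_compose[OF this continuous_torus_config[OF s1]]
  have "continuous_map (top_of_set S) (Xtop n) torus"
    by (simp add: o_def torus_def[abs_def])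
  then have torus_cont: "continuous_map (top_of_set S)
      (subtopology (Xtop n) {e \<in> topspace (Xtop n). proj_last n e \<in> U}) torus"
    using torus_fibre near[of s1] s1 by (auto simp: continuous_map_in_subtopology)
  have W_cont: "continuous_map (top_of_set S) (Xtop n) (\<lambda>x. T (base x) (torus x))"
    using continuous_map_compose[OF continuous_map_pairedI[OF base_cont torus_cont] T_cont]
    by (simp add: o_def)
  show thesis
  proof (rule that[OF s1, of "\<lambda>x. T (base x) (torus x)"])
    show "continuous_map (top_of_set ({0..1} \<times> UNIV)) (Xtop n) (\<lambda>x. T (base x) (torus x))"
      using W_cont by (simp add: S_def)
    show "proj_last n (T (base x) (torus x)) = base_config (n - 1) ((1 - fst x) * s1)"
      if "x \<in> {0..1} \<times> UNIV" for x
      using T_fibre[OF base_U torus_fibre(1)] torus_fibre(2) near[of s1] s1 that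
      by (simp add: base_def S_def)
    show "T (base (0, w)) (torus (0, w)) = torus_config n s1 w" for w
      using T_id[OF torus_fibre(1)[of "(0, w)"]] torus_fibre(2)[of "(0, w)"] near[of s1] s1
      by (simp add: base_def torus_def)
    show "T (base (t, u + 1, v)) (torus (t, u + 1, v)) = T (base (t, u, v)) (torus (t, u, v))"
      "T (base (t, u, v + 1)) (torus (t, u, v + 1)) = T (base (t, u, v)) (torus (t, u, v))" for t u v
      by (simp_all add: base_def torus_def torus_config_def loop_periodic)
  qed
qed

lemma deformed_last_point:
  assumes "locally_trivial (Xtop n) (Xtop (n - 1)) (proj_last n) F" and "n \<ge> 5"
  obtains s1 y where "0 < s1" "s1 \<le> 1/4" "continuous_on ({0..1} \<times> UNIV) y"
    and "\<And>x. x \<in> {0..1} \<times> UNIV \<Longrightarrow> chord_eq 0 3 (y x) \<noteq> 0"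
    and "\<And>x. x \<in> {0..1} \<times> UNIV \<Longrightarrow> chord_eq 1 (2 + (1 - fst x) * s1) (y x) \<noteq> 0"
    and "\<And>u v. y (0, u, v) = chord_point s1 (loop u) (loop v)"
    and "\<And>t u v. y (t, u + 1, v) = y (t, u, v)" "\<And>t u v. y (t, u, v + 1) = y (t, u, v)"
proof -
  obtain s1 W where s1: "0 < s1" "s1 \<le> 1/4"
    and W_cont: "continuous_map (top_of_set ({0..1} \<times> UNIV)) (Xtop n) W"
    and W_fibre: "\<And>x. x \<in> {0..1} \<times> UNIV \<Longrightarrow> proj_last n (W x) = base_config (n - 1) ((1 - fst x) * s1)"
    and W_initial: "\<And>w. W (0, w) = torus_config n s1 w"
    and W_periodic: "\<And>t u v. W (t, u + 1, v) = W (t, u, v)" "\<And>t u v. W (t, u, v + 1) = W (t, u, v)"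
    using fibrewise_torus_deformation[OF assms(1)] by blast
  show thesis
  proof (rule that[OF s1, of "\<lambda>x. W x (n - 1)"])
    show "continuous_on ({0..1} \<times> UNIV) (\<lambda>x. W x (n - 1))"
      using W_cont \<open>n \<ge> 5\<close> by (simp add: continuous_map_Xtop_iff)
    fix x :: "real \<times> real \<times> real"
    assume x: "x \<in> {0..1} \<times> UNIV"
    have "W x \<in> Xset n"
      using continuous_map_image_subset_topspace[OF W_cont] x by (auto simp: topspace_Xtop)
    moreover have "3 < n - 1"
      using \<open>n \<ge> 5\<close> by simp
    ultimately show "chord_eq 0 3 (W x (n - 1)) \<noteq> 0"
      "chord_eq 1 (2 + (1 - fst x) * s1) (W x (n - 1)) \<noteq> 0"
      using chord_eq_ne_0_in_fibre[OF _ W_fibre[OF x], of 0 1]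
        chord_eq_ne_0_in_fibre[OF _ W_fibre[OF x], of 2 3]
      by (simp_all add: node_def)
  qed (use \<open>n \<ge> 5\<close> in \<open>simp_all add: W_initial W_periodic torus_config_def extend_config_def\<close>)
qed

theorem proposition4p1:
  fixes n :: nat
  assumes "n \<ge> 5"
  shows "\<not> (\<exists>F :: 'c topology. locally_trivial (Xtop n) (Xtop (n - 1)) (proj_last n) F)"
proof
  assume "\<exists>F :: 'c topology. locally_trivial (Xtop n) (Xtop (n - 1)) (proj_last n) F"
  then obtain s1 y where s1: "0 < s1" "s1 \<le> 1/4" and y_cont: "continuous_on ({0..1} \<times> UNIV) y"
    and chords_ne_0: "\<And>x. x \<in> {0..1} \<times> UNIV \<Longrightarrow> chord_eq 0 3 (y x) \<noteq> 0"
      "\<And>x. x \<in> {0..1} \<times> UNIV \<Longrightarrow> chord_eq 1 (2 + (1 - fst x) * s1) (y x) \<noteq> 0"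
    and y_initial: "\<And>u v. y (0, u, v) = chord_point s1 (loop u) (loop v)"
    and y_periodic: "\<And>t u v. y (t, u + 1, v) = y (t, u, v)" "\<And>t u v. y (t, u, v + 1) = y (t, u, v)"
    using deformed_last_point \<open>n \<ge> 5\<close> by metis
  define K1 where "K1 x = chord_eq 0 3 (y x)" for x
  define K2 where "K2 x = chord_eq 1 (2 + (1 - fst x) * s1) (y x)" for x
  have "\<exists>u v. K2 (1, u, v) \<noteq> K1 (1, u, v) + of_real 2"
  proof (rule torus_winding_obstruction[where c = "1/4"])
    show "continuous_on ({0..1} \<times> UNIV) K1" "continuous_on ({0..1} \<times> UNIV) K2"
      unfolding K1_def K2_def chord_eq_def using y_cont by (auto intro!: continuous_intros)
  qed (use chords_ne_0 s1 in \<open>simp_all add: K1_def K2_def y_initial y_periodic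
      chord_eq_chord_point loop_def\<close>)
  then show False
    by (simp add: K1_def K2_def chord_eq_def)
qed

end
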